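(* Let $k\ge 3$, constants $c_1\ge\dots\ge c_k>0$ with $\sum c_i=1$, and for $n$ with all $c_in$ integers let $G_n$ be the complete $k$-partite graph with parts $V_1,\dots,V_k$, $|V_i|=c_in$. Let $w_0$ be a uniformly random initial weighting. If $c_i>\tfrac12$, then $$\mathbb{E}(m_i)\le 2c_in-n+\frac{2(1-c_i)}{2c_i-1}.$$
   Context: An initial weighting of a graph on vertex set $V$, $|V|=n$, is a bijection $w_0:V\to\{-n,\dots,-1\}$; here $w_0$ is uniform among all $n!$ such bijections. The quantity $m_i$ is defined by $$m_i=\max\Big\{x\ge 0:\ \exists\, y\ge 0 \text{ with } 2y+x\le n \text{ and } \Big|\bigcup_{j=1}^{2y+x}w_0^{-1}(-j)\cap V_i\Big|=y+x\Big\},$$ equivalently $m_i=\max_{0\le t\le n}X(t)$ where $X(t)=|\{v\in V_i: w_0(v)\ge -t\}|-|\{v\in V\setminus V_i: w_0(v)\ge -t\}|$. A complete $k$-partite graph with parts $V_1,\dots,V_k$ has an edge between $u$ and $v$ iff they lie in different parts. *)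

theory Defs
  imports Complex_Main
begin

text \<open>Initial weightings: bijections V -> {-n,...,-1} (n = card V), extended by 0 outside V
  so that the set of weightings is finite and in bijection with the n! bijections.\<close>
definition weightings :: "'a set \<Rightarrow> ('a \<Rightarrow> int) set" where
  "weightings V = {w. bij_betw w V {- int (card V) .. -1} \<and> (\<forall>v. v \<notin> V \<longrightarrow> w v = 0)}"

definition Xwalk :: "'a set \<Rightarrow> 'a set \<Rightarrow> ('a \<Rightarrow> int) \<Rightarrow> nat \<Rightarrow> int" where
  "Xwalk V Vi w t = int (card {v \<in> Vi. w v \<ge> - int t}) - int (card {v \<in> V - Vi. w v \<ge> - int t})"

definition m_part :: "'a set \<Rightarrow> 'a set \<Rightarrow> ('a \<Rightarrow> int) \<Rightarrow> int" where
  "m_part V Vi w = Max ((\<lambda>t. Xwalk V Vi w t) ` {0 .. card V})"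

definition expected_m :: "'a set \<Rightarrow> 'a set \<Rightarrow> real" where
  "expected_m V Vi = (\<Sum>w\<in>weightings V. real_of_int (m_part V Vi w)) / real (card (weightings V))"

definition complete_multipartite_edge :: "nat \<Rightarrow> (nat \<Rightarrow> 'a set) \<Rightarrow> 'a \<Rightarrow> 'a \<Rightarrow> bool" where
  "complete_multipartite_edge k P u v \<longleftrightarrow>
     (\<exists>i\<in>{1..k}. \<exists>j\<in>{1..k}. i \<noteq> j \<and> u \<in> P i \<and> v \<in> P j)"

end

theory Submission
  imports Defs "HOL-Combinatorics.Multiset_Permutations"
begin

text \<open>A uniform weighting is the same as a uniformly random ordering of \<open>V\<close> (the vertex of
weight \<open>-k\<close> comes \<open>k\<close>-th), and \<open>m\<^sub>i\<close> is the maximum of the \<open>\<plusminus>1\<close> walk that steps up on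
\<open>V\<^sub>i\<close> and down elsewhere. With \<open>a = |V\<^sub>i|\<close> up-steps and \<open>b = n - a\<close> down-steps, the reflection
principle shows that exactly \<open>C(a + b, max a (b + h))\<close> of the \<open>C(a + b, a)\<close> step patterns
reach height \<open>h\<close>. Summing these tail probabilities over \<open>h \<ge> 1\<close>, the terms with
\<open>h \<le> a - b\<close> contribute \<open>a - b\<close>, and the rest are dominated by a geometric series of ratio
\<open>b / a\<close>, whose sum is \<open>b / (a - b)\<close>. This gives
\<open>\<bbbE>(m\<^sub>i) \<le> (2c\<^sub>i - 1) n + (1 - c\<^sub>i) / (2c\<^sub>i - 1)\<close>, half the stated error term.\<close>

text \<open>The truncated subtraction in \<open>walk_max\<close> is intended: it is the recursion
\<open>M(x # xs) = max 0 (\<plusminus>1 + M xs)\<close> for the maximum over all prefixes.\<close>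

fun walk_max :: "('a \<Rightarrow> bool) \<Rightarrow> 'a list \<Rightarrow> nat" where
  "walk_max S [] = 0"
| "walk_max S (x # xs) = (if S x then Suc (walk_max S xs) else walk_max S xs - 1)"

definition walk_height :: "('a \<Rightarrow> bool) \<Rightarrow> 'a list \<Rightarrow> int" where
  "walk_height S ys = int (length (filter S ys)) - int (length (filter (\<lambda>y. \<not> S y) ys))"

lemma walk_height_Nil [simp]: "walk_height S [] = 0"
  by (simp add: walk_height_def)

lemma walk_height_Cons [simp]:
  "walk_height S (x # ys) = (if S x then 1 else -1) + walk_height S ys"
  by (simp add: walk_height_def)

lemma walk_max_Cons_eq_max:
  "int (walk_max S (x # xs)) = max 0 ((if S x then 1 else -1) + int (walk_max S xs))"
  by auto

lemma walk_max_eq_Max: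
  "int (walk_max S xs) = Max ((\<lambda>t. walk_height S (take t xs)) ` {0..length xs})"
proof (induction xs)
  case Nil
  then show ?case by simp
next
  case (Cons x xs)
  let ?c = "if S x then 1 else -1 :: int"
  let ?F = "(\<lambda>t. walk_height S (take t xs)) ` {0..length xs}"
  have dom: "{0..length (x # xs)} = insert 0 (Suc ` {0..length xs})"
    by (auto simp: image_iff not0_implies_Suc)
  have "(\<lambda>t. walk_height S (take t (x # xs))) ` {0..length (x # xs)} = insert 0 ((+) ?c ` ?F)"
    unfolding dom image_insert image_image by simp
  moreover have "Max ((+) ?c ` ?F) = ?c + Max ?F"
    by (rule mono_Max_commute[symmetric]) (auto simp: mono_def)
  ultimately show ?case
    using Cons.IH by (simp add: walk_max_Cons_eq_max del: walk_max.simps)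
qed

lemma walk_max_le_length: "walk_max S xs \<le> length xs"
  by (induction xs) auto

lemma card_permutations_filter_Cons:
  assumes "finite U" "U \<noteq> {}"
  shows "card {xs \<in> permutations_of_set U. P xs} =
         (\<Sum>x\<in>U. card {ys \<in> permutations_of_set (U - {x}). P (x # ys)})"
proof -
  have "{xs \<in> permutations_of_set U. P xs} =
        (\<Union>x\<in>U. (#) x ` {ys \<in> permutations_of_set (U - {x}). P (x # ys)})"
    by (subst permutations_of_set_nonempty[OF assms(2)]) auto
  also have "card \<dots> = (\<Sum>x\<in>U. card ((#) x ` {ys \<in> permutations_of_set (U - {x}). P (x # ys)}))"
    by (rule card_UN_disjoint) (use assms in auto)
  also have "\<dots> = (\<Sum>x\<in>U. card {ys \<in> permutations_of_set (U - {x}). P (x # ys)})"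
    by (simp add: card_image)
  finally show ?thesis .
qed

lemma card_permutations_walk_max_ge_first_step:
  assumes "finite A" "finite B" "\<forall>x\<in>A. S x" "\<forall>x\<in>B. \<not> S x" "0 < h" "A \<union> B \<noteq> {}"
  shows "card {xs \<in> permutations_of_set (A \<union> B). h \<le> walk_max S xs} =
    (\<Sum>x\<in>A. card {ys \<in> permutations_of_set ((A - {x}) \<union> B). h - 1 \<le> walk_max S ys}) +
    (\<Sum>x\<in>B. card {ys \<in> permutations_of_set (A \<union> (B - {x})). h + 1 \<le> walk_max S ys})"
proof -
  have disj: "A \<inter> B = {}"
    using assms(3,4) by auto
  have up: "{ys \<in> permutations_of_set (A \<union> B - {x}). h \<le> walk_max S (x # ys)} =
      {ys \<in> permutations_of_set ((A - {x}) \<union> B). h - 1 \<le> walk_max S ys}" if "x \<in> A" for x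
  proof -
    have "A \<union> B - {x} = (A - {x}) \<union> B"
      using that disj by auto
    then show ?thesis
      using that assms(3,5) by auto
  qed
  have down: "{ys \<in> permutations_of_set (A \<union> B - {x}). h \<le> walk_max S (x # ys)} =
      {ys \<in> permutations_of_set (A \<union> (B - {x})). h + 1 \<le> walk_max S ys}" if "x \<in> B" for x
  proof -
    have "A \<union> B - {x} = A \<union> (B - {x})"
      using that disj by auto
    then show ?thesis
      using that assms(4,5) by auto
  qed
  have "card {xs \<in> permutations_of_set (A \<union> B). h \<le> walk_max S xs} =
    (\<Sum>x\<in>A. card {ys \<in> permutations_of_set (A \<union> B - {x}). h \<le> walk_max S (x # ys)}) +
    (\<Sum>x\<in>B. card {ys \<in> permutations_of_set (A \<union> B - {x}). h \<le> walk_max S (x # ys)})"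
    using assms disj
    by (simp add: card_permutations_filter_Cons sum.union_disjoint del: walk_max.simps)
  also have "\<dots> = (\<Sum>x\<in>A. card {ys \<in> permutations_of_set ((A - {x}) \<union> B). h - 1 \<le> walk_max S ys}) +
    (\<Sum>x\<in>B. card {ys \<in> permutations_of_set (A \<union> (B - {x})). h + 1 \<le> walk_max S ys})"
    by (intro arg_cong2[where f = "(+)"] sum.cong refl) (simp_all only: up down)
  finally show ?thesis .
qed

lemma choose_max_rec:
  assumes "0 < h" "0 < a + b"
  shows "(a + b) choose max a (b + h) =
    (if 0 < a then (a - 1 + b) choose max (a - 1) (b + (h - 1)) else 0) +
    (if 0 < b then (a + (b - 1)) choose max a (b - 1 + (h + 1)) else 0)"
proof -
  consider "a = 0" | "b = 0" | "0 < a" "0 < b" by blast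
  then show ?thesis
  proof cases
    case 1
    then show ?thesis using assms by (simp add: binomial_eq_0)
  next
    case 2
    then have "max (a - 1) (h - 1) = max a h - 1" "0 < a" using assms by auto
    then show ?thesis using 2 by (cases "h \<le> a") (simp_all add: max_def binomial_eq_0)
  next
    case 3
    have "max (a - 1) (b + (h - 1)) = max a (b + h) - 1" using assms by simp
    then show ?thesis using 3 assms choose_reduce_nat[of "a + b" "max a (b + h)"] by simp
  qed
qed

definition reach_count :: "nat \<Rightarrow> nat \<Rightarrow> nat \<Rightarrow> nat" where
  "reach_count a b h = fact a * fact b * ((a + b) choose max a (b + h))"

lemma reach_count_0: "reach_count a b 0 = fact (a + b)"
  using binomial_fact_lemma[of a "a + b"] binomial_fact_lemma[of b "a + b"]
  by (simp add: reach_count_def max_def algebra_simps)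

lemma reach_count_rec:
  assumes "0 < h" "0 < a + b"
  shows "reach_count a b h = a * reach_count (a - 1) b (h - 1) + b * reach_count a (b - 1) (h + 1)"
proof -
  have "a * reach_count (a - 1) b (h - 1) + b * reach_count a (b - 1) (h + 1) = fact a * fact b *
      ((if 0 < a then (a - 1 + b) choose max (a - 1) (b + (h - 1)) else 0) +
       (if 0 < b then (a + (b - 1)) choose max a (b - 1 + (h + 1)) else 0))"
    by (cases "a = 0"; cases "b = 0") (simp_all add: reach_count_def fact_reduce algebra_simps)
  then show ?thesis
    using choose_max_rec[OF assms] by (simp add: reach_count_def)
qed

lemma card_permutations_walk_max_ge:
  assumes "finite A" "finite B" "\<forall>x\<in>A. S x" "\<forall>x\<in>B. \<not> S x"
  shows "card {xs \<in> permutations_of_set (A \<union> B). h \<le> walk_max S xs} = reach_count (card A) (card B) h"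
  using assms
proof (induction "card A + card B" arbitrary: A B h rule: less_induct)
  case less
  consider "h = 0" | "A \<union> B = {}" "0 < h" | "0 < h" "A \<union> B \<noteq> {}" by blast
  then show ?case
  proof cases
    case 1
    have "card (A \<union> B) = card A + card B"
      using less.prems by (subst card_Un_disjoint) auto
    then show ?thesis
      using 1 less.prems by (simp add: reach_count_0)
  next
    case 2
    then show ?thesis by (simp add: reach_count_def binomial_eq_0)
  next
    case 3
    have IH_A: "card {ys \<in> permutations_of_set ((A - {x}) \<union> B). h - 1 \<le> walk_max S ys} =
        reach_count (card A - 1) (card B) (h - 1)" if "x \<in> A" for x
    proof -
      have "card (A - {x}) + card B < card A + card B"
        using that less.prems card_Diff1_less by (metis add_less_cancel_right)
      then show ?thesis
        using that less.prems less.hyps[of "A - {x}" B "h - 1"] by simp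
    qed
    have IH_B: "card {ys \<in> permutations_of_set (A \<union> (B - {x})). h + 1 \<le> walk_max S ys} =
        reach_count (card A) (card B - 1) (h + 1)" if "x \<in> B" for x
    proof -
      have "card A + card (B - {x}) < card A + card B"
        using that less.prems card_Diff1_less by (metis add_less_cancel_left)
      then show ?thesis
        using that less.prems less.hyps[of A "B - {x}" "h + 1"] by simp
    qed
    have "(\<Sum>x\<in>A. card {ys \<in> permutations_of_set ((A - {x}) \<union> B). h - 1 \<le> walk_max S ys}) =
        (\<Sum>x\<in>A. reach_count (card A - 1) (card B) (h - 1))"
      by (rule sum.cong[OF refl], erule IH_A)
    moreover have "(\<Sum>x\<in>B. card {ys \<in> permutations_of_set (A \<union> (B - {x})). h + 1 \<le> walk_max S ys}) =
        (\<Sum>x\<in>B. reach_count (card A) (card B - 1) (h + 1))"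
      by (rule sum.cong[OF refl], erule IH_B)
    moreover have "0 < card A + card B"
      using 3 less.prems by auto
    ultimately show ?thesis
      using reach_count_rec[OF 3(1)]
      by (simp only: card_permutations_walk_max_ge_first_step[OF less.prems 3] sum_constant of_nat_id)
  qed
qed

fun weighting_of_list :: "'a list \<Rightarrow> 'a \<Rightarrow> int" where
  "weighting_of_list [] v = 0"
| "weighting_of_list (x # xs) v =
     (if v = x then -1 else if v \<in> set xs then weighting_of_list xs v - 1 else 0)"

lemma weighting_of_list_notin: "v \<notin> set xs \<Longrightarrow> weighting_of_list xs v = 0"
  by (induction xs) auto

lemma weighting_of_list_nth:
  "distinct xs \<Longrightarrow> k < length xs \<Longrightarrow> weighting_of_list xs (xs ! k) = - int k - 1"
proof (induction xs arbitrary: k)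
  case (Cons x xs)
  then show ?case by (cases k) (auto simp: nth_eq_iff_index_eq)
qed simp

lemma weighting_of_list_ge_iff:
  assumes "distinct xs" "v \<in> set xs"
  shows "- int t \<le> weighting_of_list xs v \<longleftrightarrow> v \<in> set (take t xs)"
proof -
  obtain k where k: "k < length xs" "v = xs ! k"
    using assms(2) by (metis in_set_conv_nth)
  then have "v \<in> set (take t xs) \<longleftrightarrow> k < t"
    using assms(1) by (auto simp: in_set_conv_nth nth_eq_iff_index_eq)
  then show ?thesis
    using k weighting_of_list_nth[OF assms(1)] by auto
qed

lemma Xwalk_weighting_of_list:
  assumes "xs \<in> permutations_of_set V" "Vi \<subseteq> V"
  shows "Xwalk V Vi (weighting_of_list xs) t = walk_height (\<lambda>v. v \<in> Vi) (take t xs)"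
proof -
  have xs: "distinct xs" "set xs = V"
    using assms(1) by (auto simp: permutations_of_set_def)
  have ge: "- int t \<le> weighting_of_list xs v \<longleftrightarrow> v \<in> set (take t xs)" if "v \<in> V" for v
    using that xs weighting_of_list_ge_iff[OF xs(1)] by simp
  have "set (take t xs) \<subseteq> V"
    using xs(2) set_take_subset by metis
  then have "{v \<in> Vi. - int t \<le> weighting_of_list xs v} = {v. v \<in> Vi} \<inter> set (take t xs)"
    and "{v \<in> V - Vi. - int t \<le> weighting_of_list xs v} = {v. v \<notin> Vi} \<inter> set (take t xs)"
    using ge assms(2) by auto
  then show ?thesis
    using xs(1) by (simp add: Xwalk_def walk_height_def distinct_length_filter)
qed

lemma m_part_weighting_of_list:
  assumes "xs \<in> permutations_of_set V" "Vi \<subseteq> V"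
  shows "m_part V Vi (weighting_of_list xs) = int (walk_max (\<lambda>v. v \<in> Vi) xs)"
  using assms length_finite_permutations_of_set[OF assms(1)]
  by (simp add: m_part_def Xwalk_weighting_of_list walk_max_eq_Max)

lemma bij_betw_neg_Suc: "bij_betw (\<lambda>k. - int k - 1) {..<n} {- int n..-1}"
  by (rule bij_betw_byWitness[where f' = "\<lambda>i. nat (- i - 1)"]) auto

lemma weighting_of_list_in_weightings:
  assumes "xs \<in> permutations_of_set V"
  shows "weighting_of_list xs \<in> weightings V"
proof -
  have xs: "distinct xs" "set xs = V" "length xs = card V"
    using assms length_finite_permutations_of_set by (auto simp: permutations_of_set_def)
  have "bij_betw (weighting_of_list xs \<circ> (!) xs) {..<card V} {- int (card V)..-1}"
    using bij_betw_neg_Suc by (rule bij_betw_cong[THEN iffD1, rotated])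
      (simp add: weighting_of_list_nth xs)
  moreover have "bij_betw ((!) xs) {..<card V} V"
    using bij_betw_nth[OF xs(1)] xs by simp
  ultimately have "bij_betw (weighting_of_list xs) V {- int (card V)..-1}"
    using bij_betw_comp_iff by blast
  then show ?thesis
    using xs(2) by (simp add: weightings_def weighting_of_list_notin)
qed

definition list_of_weighting :: "'a set \<Rightarrow> ('a \<Rightarrow> int) \<Rightarrow> 'a list" where
  "list_of_weighting V w = map (\<lambda>k. inv_into V w (- int k - 1)) [0..<card V]"

lemma list_of_weighting_weighting_of_list:
  assumes "xs \<in> permutations_of_set V"
  shows "list_of_weighting V (weighting_of_list xs) = xs"
proof -
  have xs: "distinct xs" "set xs = V" "length xs = card V"
    using assms length_finite_permutations_of_set by (auto simp: permutations_of_set_def)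
  have "inj_on (weighting_of_list xs) V"
    using weighting_of_list_in_weightings[OF assms] by (simp add: weightings_def bij_betw_def)
  then have "inv_into V (weighting_of_list xs) (- int k - 1) = xs ! k" if "k < card V" for k
    using that xs by (metis inv_into_f_f nth_mem weighting_of_list_nth)
  then show ?thesis
    using xs(3) by (intro nth_equalityI) (simp_all add: list_of_weighting_def)
qed

lemma bij_betw_list_of_weighting_nth:
  assumes "w \<in> weightings V"
  shows "bij_betw (\<lambda>k. inv_into V w (- int k - 1)) {..<card V} V"
proof -
  have "bij_betw w V {- int (card V)..-1}"
    using assms by (simp add: weightings_def)
  then have "bij_betw (inv_into V w \<circ> (\<lambda>k. - int k - 1)) {..<card V} V"
    using bij_betw_comp_iff[OF bij_betw_neg_Suc] bij_betw_inv_into by blast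
  then show ?thesis
    by (simp add: comp_def)
qed

lemma list_of_weighting_in_permutations:
  assumes "w \<in> weightings V"
  shows "list_of_weighting V w \<in> permutations_of_set V"
  using bij_betw_list_of_weighting_nth[OF assms]
  by (auto simp: permutations_of_set_def list_of_weighting_def distinct_map bij_betw_def
      lessThan_atLeast0)

lemma weighting_of_list_list_of_weighting:
  assumes "w \<in> weightings V"
  shows "weighting_of_list (list_of_weighting V w) = w"
proof
  let ?xs = "list_of_weighting V w" and ?h = "\<lambda>k. inv_into V w (- int k - 1)"
  have w: "bij_betw w V {- int (card V)..-1}" "\<And>v. v \<notin> V \<Longrightarrow> w v = 0"
    using assms by (auto simp: weightings_def)
  have xs: "distinct ?xs" "set ?xs = V"
    using list_of_weighting_in_permutations[OF assms] by (auto simp: permutations_of_set_def)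
  fix v
  show "weighting_of_list ?xs v = w v"
  proof (cases "v \<in> V")
    case True
    then obtain k where "k < card V" "v = ?h k"
      using bij_betw_list_of_weighting_nth[OF assms] by (auto simp: bij_betw_def)
    then show ?thesis
      using weighting_of_list_nth[OF xs(1), of k] w(1)
      by (simp add: list_of_weighting_def f_inv_into_f bij_betw_def)
  next
    case False
    then show ?thesis
      using w(2) xs(2) by (simp add: weighting_of_list_notin)
  qed
qed

lemma bij_betw_weighting_of_list:
  "bij_betw weighting_of_list (permutations_of_set V) (weightings V)"
  by (rule bij_betw_byWitness[where f' = "list_of_weighting V"])
    (auto simp: list_of_weighting_weighting_of_list weighting_of_list_in_weightings
      list_of_weighting_in_permutations weighting_of_list_list_of_weighting)

lemma sum_eq_sum_card_ge:
  fixes f :: "'a \<Rightarrow> nat"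
  assumes "finite X" "\<forall>x\<in>X. f x \<le> N"
  shows "(\<Sum>x\<in>X. f x) = (\<Sum>h=1..N. card {x \<in> X. h \<le> f x})"
proof -
  have "(\<Sum>x\<in>X. f x) = (\<Sum>x\<in>X. \<Sum>h=1..N. if h \<le> f x then 1 else 0)"
  proof (intro sum.cong refl)
    fix x assume "x \<in> X"
    then have "{1..N} \<inter> {h. h \<le> f x} = {1..f x}"
      using assms(2) by auto
    then show "f x = (\<Sum>h=1..N. if h \<le> f x then 1 else 0)"
      by (simp add: sum.If_cases)
  qed
  also have "\<dots> = (\<Sum>h=1..N. card {x \<in> X. h \<le> f x})"
    using assms(1) by (subst sum.swap) (simp add: sum.If_cases Int_def)
  finally show ?thesis .
qed

lemma expected_m_eq_sum_choose:
  assumes "finite V" "Vi \<subseteq> V"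
  shows "expected_m V Vi =
    (\<Sum>h=1..card V. real (card V choose max (card Vi) (card (V - Vi) + h))) / real (card V choose card Vi)"
proof -
  let ?S = "\<lambda>v. v \<in> Vi" and ?P = "permutations_of_set V"
  let ?a = "card Vi" and ?b = "card (V - Vi)"
  have n: "card V = ?a + ?b"
    using assms by (simp add: card_Diff_subset card_mono finite_subset)
  have "(\<Sum>w\<in>weightings V. real_of_int (m_part V Vi w)) = real (\<Sum>xs\<in>?P. walk_max ?S xs)"
    using assms(2) by (simp add: sum.reindex_bij_betw[OF bij_betw_weighting_of_list, symmetric]
        m_part_weighting_of_list)
  also have "\<dots> = real (\<Sum>h=1..card V. card {xs \<in> ?P. h \<le> walk_max ?S xs})"
    by (subst sum_eq_sum_card_ge[where N = "card V"])
      (auto simp: length_finite_permutations_of_set walk_max_le_length[THEN order_trans])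
  also have "\<dots> = real (fact ?a * fact ?b) * (\<Sum>h=1..card V. real (card V choose max ?a (?b + h)))"
    using card_permutations_walk_max_ge[of Vi "V - Vi" ?S] assms n
    by (simp add: Un_absorb1 finite_subset sum_distrib_left reach_count_def)
  finally have sum: "(\<Sum>w\<in>weightings V. real_of_int (m_part V Vi w)) =
      real (fact ?a * fact ?b) * (\<Sum>h=1..card V. real (card V choose max ?a (?b + h)))" .
  have "card (weightings V) = fact ?a * fact ?b * (card V choose ?a)"
    using bij_betw_same_card[OF bij_betw_weighting_of_list[of V]] assms(1) n
      binomial_fact_lemma[of ?a "card V"]
    by simp
  then show ?thesis
    unfolding expected_m_def sum by simp
qed

lemma choose_Suc_mult_le:
  assumes "a \<le> k" "a + b = n"
  shows "a * (n choose Suc k) \<le> b * (n choose k)"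
proof -
  have "a * (n choose Suc k) \<le> Suc k * (n choose Suc k)"
    using assms by (intro mult_right_mono) auto
  also have "\<dots> = (n - k) * (n choose k)"
    by (metis binomial_absorb_comp binomial_absorption)
  also have "\<dots> \<le> b * (n choose k)"
    using assms by (intro mult_right_mono) auto
  finally show ?thesis .
qed

lemma choose_add_le_geometric:
  assumes "b < a"
  shows "real ((a + b) choose (a + j)) \<le> real ((a + b) choose a) * (real b / real a) ^ j"
proof (induction j)
  case (Suc j)
  have "real a * real ((a + b) choose Suc (a + j)) \<le> real b * real ((a + b) choose (a + j))"
    using choose_Suc_mult_le[of a "a + j" b "a + b"] by (simp flip: of_nat_mult)
  then have "real ((a + b) choose (a + Suc j)) \<le> real b / real a * real ((a + b) choose (a + j))"
    using assms by (simp add: field_simps)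
  also have "\<dots> \<le> real b / real a * (real ((a + b) choose a) * (real b / real a) ^ j)"
    using Suc.IH by (intro mult_left_mono) auto
  finally show ?case
    by (simp add: algebra_simps)
qed simp

lemma sum_power_from_1_le:
  fixes r :: real
  assumes "0 \<le> r" "r < 1"
  shows "(\<Sum>j=1..M. r ^ j) \<le> r / (1 - r)"
  using assms by (simp add: sum_gp divide_right_mono)

lemma sum_choose_max_le:
  assumes "b < a"
  shows "(\<Sum>h=1..a+b. real ((a + b) choose max a (b + h)))
    \<le> real ((a + b) choose a) * (real (a - b) + real b / (real a - real b))"
proof -
  let ?C = "real ((a + b) choose a)" and ?r = "real b / real a"
  have "{1..a+b} = {1..a-b} \<union> {a-b+1..a-b+2*b}"
    using assms by auto
  then have "(\<Sum>h=1..a+b. real ((a + b) choose max a (b + h)))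
      = (\<Sum>h=1..a-b. real ((a + b) choose max a (b + h)))
        + (\<Sum>h=a-b+1..a-b+2*b. real ((a + b) choose max a (b + h)))"
    by (simp add: sum.union_disjoint)
  also have "(\<Sum>h=1..a-b. real ((a + b) choose max a (b + h))) = real (a - b) * ?C"
  proof -
    have "max a (b + h) = a" if "h \<in> {1..a-b}" for h
      using that by auto
    then show ?thesis
      by simp
  qed
  also have "(\<Sum>h=a-b+1..a-b+2*b. real ((a + b) choose max a (b + h)))
      = (\<Sum>j=1..2*b. real ((a + b) choose (a + j)))"
    using assms
      sum.shift_bounds_cl_nat_ivl[of "\<lambda>h. real ((a + b) choose max a (b + h))" 1 "a - b" "2 * b"]
    by (simp add: add.commute)
  also have "\<dots> \<le> (\<Sum>j=1..2*b. ?C * ?r ^ j)"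
    using assms by (intro sum_mono choose_add_le_geometric)
  also have "\<dots> = ?C * (\<Sum>j=1..2*b. ?r ^ j)"
    by (simp add: sum_distrib_left)
  also have "\<dots> \<le> ?C * (?r / (1 - ?r))"
    using assms by (intro mult_left_mono sum_power_from_1_le) auto
  also have "?r / (1 - ?r) = real b / (real a - real b)"
    using assms by (simp add: field_simps)
  finally show ?thesis
    by (simp add: algebra_simps)
qed

lemma expected_m_le:
  assumes "finite V" "Vi \<subseteq> V" "card (V - Vi) < card Vi"
  shows "expected_m V Vi \<le>
    real (card Vi - card (V - Vi)) + real (card (V - Vi)) / (real (card Vi) - real (card (V - Vi)))"
proof -
  have "card V = card Vi + card (V - Vi)"
    using assms by (simp add: card_Diff_subset card_mono finite_subset)
  then show ?thesis
    using expected_m_eq_sum_choose[OF assms(1,2)] sum_choose_max_le[OF assms(3)]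
    by (simp add: divide_le_eq mult.commute)
qed

lemma expected_m_le_fraction:
  fixes c :: real
  assumes "finite V" "Vi \<subseteq> V" "real (card Vi) = c * real (card V)" "1/2 < c" "c \<le> 1"
  shows "expected_m V Vi \<le> (2 * c - 1) * real (card V) + (1 - c) / (2 * c - 1)"
proof (cases "card V = 0")
  case True
  then show ?thesis
    using expected_m_eq_sum_choose[OF assms(1,2)] assms(4,5) by (simp add: divide_nonneg_pos)
next
  case False
  have b: "real (card (V - Vi)) = (1 - c) * real (card V)"
    using assms(1-3) card_mono[OF assms(1,2)] by (simp add: card_Diff_subset finite_subset algebra_simps)
  have gap: "real (card Vi) - real (card (V - Vi)) = (2 * c - 1) * real (card V)"
    using assms(3) b by (simp add: algebra_simps)
  moreover have "0 < (2 * c - 1) * real (card V)"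
    using False assms(4) by simp
  ultimately have "card (V - Vi) < card Vi"
    by simp
  moreover have "real (card (V - Vi)) / ((2 * c - 1) * real (card V)) = (1 - c) / (2 * c - 1)"
    using b False by simp
  ultimately show ?thesis
    using expected_m_le[OF assms(1,2)] gap by simp
qed

theorem mainTheorem7:
  fixes k n i :: nat and c :: "nat \<Rightarrow> real" and V :: "'a set" and P :: "nat \<Rightarrow> 'a set"
  assumes "k \<ge> 3"
    and "\<forall>j\<in>{1..<k}. c j \<ge> c (Suc j)"
    and "\<forall>j\<in>{1..k}. c j > 0"
    and "(\<Sum>j=1..k. c j) = 1"
    and "\<forall>j\<in>{1..k}. c j * real n \<in> \<int>"
    and "finite V" and "card V = n"
    and "\<forall>j\<in>{1..k}. P j \<subseteq> V"
    and "\<forall>j\<in>{1..k}. \<forall>l\<in>{1..k}. j \<noteq> l \<longrightarrow> P j \<inter> P l = {}"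
    and "(\<Union>j\<in>{1..k}. P j) = V"
    and "\<forall>j\<in>{1..k}. real (card (P j)) = c j * real n"
    and "i \<in> {1..k}"
    and "c i > 1/2"
  shows "expected_m V (P i) \<le> 2 * c i * real n - real n + 2 * (1 - c i) / (2 * c i - 1)"
proof -
  have "c i \<le> (\<Sum>j=1..k. c j)"
    using assms(3,12) by (intro member_le_sum) (auto simp: less_imp_le)
  then have "c i \<le> 1"
    using assms(4) by simp
  then have "expected_m V (P i) \<le> (2 * c i - 1) * real n + (1 - c i) / (2 * c i - 1)"
    using expected_m_le_fraction[of V "P i" "c i"] assms(6-8,11-13) by auto
  moreover have "(1 - c i) / (2 * c i - 1) \<le> 2 * (1 - c i) / (2 * c i - 1)"
    using \<open>c i \<le> 1\<close> assms(13) by (simp add: divide_right_mono)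
  ultimately show ?thesis
    by (simp add: left_diff_distrib)
qed

end
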